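(* Let $V$ be an $N$-dimensional vector space over $\mathbb{F}_q$, $\mathcal{F}$ a spanning family in $V$ with projective metric $d_{\mathcal{F}}$, and $\mathcal{C}\subseteq V$ a code with at least two elements and minimum distance $d=d_{\mathcal{F}}(\mathcal{C})$. Then $|\mathcal{C}|\le q^{N-\mu_{\mathcal{F}}(d-1)}\le q^{N-d+1}$.
   Context: A spanning family is a set $\mathcal{F}$ of pairwise linearly independent nonzero vectors with $\langle\mathcal{F}\rangle=V$; $\operatorname{wt}_{\mathcal{F}}(v)=\min\{|I|:I\subseteq\mathcal{F},v\in\langle I\rangle\}$, $d_{\mathcal{F}}(x,y)=\operatorname{wt}_{\mathcal{F}}(y-x)$, and $d_{\mathcal{F}}(\mathcal{C})=\min\{d_{\mathcal{F}}(x,y):x,y\in\mathcal{C},x\neq y\}$. For an integer $0\le t\le N$, $\mu_{\mathcal{F}}(t)$ is the maximum cardinality of a subset $\mathcal{G}\subseteq\mathcal{F}$ whose elements are linearly independent and such that every $v\in\langle\mathcal{G}\rangle$ has $\operatorname{wt}_{\mathcal{F}}(v)\le t$. *)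

theory Defs
  imports "HOL-Analysis.Analysis"
begin

text \<open>The ambient space V is 'a^'n over a finite field 'a, so N = CARD('n), q = CARD('a).
  Linear algebra notions are those of the vector space interpretation vec (scalar mult *s).\<close>

definition spanning_family :: "('a::field ^ 'n) set \<Rightarrow> bool" where
  "spanning_family F \<longleftrightarrow>
     0 \<notin> F \<and>
     (\<forall>x\<in>F. \<forall>y\<in>F. x \<noteq> y \<longrightarrow> vec.independent {x, y}) \<and>
     vec.span F = UNIV"

definition wtF :: "('a::field ^ 'n) set \<Rightarrow> 'a ^ 'n \<Rightarrow> nat" where
  "wtF F v = (LEAST k. \<exists>I. I \<subseteq> F \<and> finite I \<and> card I = k \<and> v \<in> vec.span I)"

definition distF :: "('a::field ^ 'n) set \<Rightarrow> 'a ^ 'n \<Rightarrow> 'a ^ 'n \<Rightarrow> nat" where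
  "distF F x y = wtF F (y - x)"

definition min_distF :: "('a::field ^ 'n) set \<Rightarrow> ('a ^ 'n) set \<Rightarrow> nat" where
  "min_distF F C = Min {distF F x y | x y. x \<in> C \<and> y \<in> C \<and> x \<noteq> y}"

definition muF :: "('a::field ^ 'n) set \<Rightarrow> nat \<Rightarrow> nat" where
  "muF F t = Max {card G | G. G \<subseteq> F \<and> vec.independent G \<and>
                              (\<forall>v\<in>vec.span G. wtF F v \<le> t)}"

end

theory Submission
  imports Defs "HOL-Library.FuncSet"
begin

text \<open>Take an independent set \<open>G \<subseteq> F\<close> of maximal size \<open>\<mu> = \<mu>\<^sub>F(d - 1)\<close> all of whose span has
  weight below \<open>d\<close>. Two distinct codewords cannot differ by a nonzero vector of \<open>span G\<close>, so
  projecting \<open>V = span G \<oplus> span H\<close> onto a complement \<open>span H\<close> of dimension \<open>N - \<mu>\<close> is injective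
  on the code, giving \<open>|C| \<le> q^(N - \<mu>)\<close>. Any \<open>d - 1\<close> vectors of a basis contained in \<open>F\<close> span
  vectors of weight at most \<open>d - 1\<close>, hence \<open>\<mu> \<ge> d - 1\<close>.\<close>

lemma card_vec_span_le:
  fixes H :: "('a::{finite,field} ^ 'n) set"
  shows "card (vec.span H) \<le> CARD('a) ^ card H"
proof -
  let ?comb = "\<lambda>u. \<Sum>v\<in>H. u v *s v"
  have "vec.span H \<subseteq> ?comb ` (H \<rightarrow>\<^sub>E (UNIV::'a set))"
  proof
    fix x assume "x \<in> vec.span H"
    then obtain u where x: "x = ?comb u"
      using vec.span_finite[OF finite] by blast
    show "x \<in> ?comb ` (H \<rightarrow>\<^sub>E UNIV)"
    proof (rule image_eqI)
      show "x = ?comb (restrict u H)"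
        using x by (simp cong: sum.cong)
      show "restrict u H \<in> H \<rightarrow>\<^sub>E UNIV"
        by simp
    qed
  qed
  then have "card (vec.span H) \<le> card (?comb ` (H \<rightarrow>\<^sub>E (UNIV::'a set)))"
    by (rule card_mono[OF finite])
  also have "\<dots> \<le> card (H \<rightarrow>\<^sub>E (UNIV::'a set))"
    by (rule card_image_le[OF finite])
  also have "\<dots> = CARD('a) ^ card H"
    by (rule card_funcsetE[OF finite])
  finally show ?thesis .
qed

lemma vec_basis_card_eq:
  fixes B :: "('a::field ^ 'n) set"
  assumes "vec.independent B" "vec.span B = UNIV"
  shows "card B = CARD('n)"
  using vec.basis_card_eq_dim[of B UNIV] assms vec_dim_card by auto

lemma vec_independent_card_le:
  fixes G :: "('a::field ^ 'n) set"
  assumes "vec.independent G"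
  shows "card G \<le> CARD('n)"
proof -
  have "card G \<le> vec.dim (UNIV :: ('a ^ 'n) set)"
    using vec.independent_card_le_dim[of G UNIV] assms by blast
  then show ?thesis
    by (simp only: vec_dim_card)
qed

lemma vec_obtain_basis_subset:
  fixes F :: "('a::field ^ 'n) set"
  assumes "vec.span F = UNIV"
  obtains B where "B \<subseteq> F" "vec.independent B" "vec.span B = UNIV" "card B = CARD('n)"
proof -
  obtain B where B: "B \<subseteq> F" "vec.independent B" "F \<subseteq> vec.span B"
    using vec.maximal_independent_subset by blast
  then have "vec.span B = UNIV"
    using assms by (metis top.extremum_uniqueI vec.span_minimal vec.subspace_span)
  with B show thesis
    using that vec_basis_card_eq by blast
qed

lemma vec_obtain_complement:
  fixes G :: "('a::field ^ 'n) set"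
  assumes "vec.independent G"
  obtains H where "card H = CARD('n) - card G"
    and "\<And>x. \<exists>h\<in>vec.span H. x - h \<in> vec.span G"
proof -
  obtain B where B: "G \<subseteq> B" "vec.independent B" "UNIV \<subseteq> vec.span B"
    using vec.maximal_independent_subset_extend[OF subset_UNIV assms] by metis
  have "finite G"
    using B(1,2) vec.finiteI_independent finite_subset by blast
  moreover have "card B = CARD('n)"
    using B(2,3) vec_basis_card_eq by blast
  ultimately have "card (B - G) = CARD('n) - card G"
    using B(1) card_Diff_subset by metis
  moreover have "\<exists>h\<in>vec.span (B - G). x - h \<in> vec.span G" for x
  proof -
    have "G \<union> (B - G) = B"
      using B(1) by blast
    then have "x \<in> vec.span (G \<union> (B - G))"
      using B(3) by auto
    then obtain g h where "x = g + h" "g \<in> vec.span G" "h \<in> vec.span (B - G)"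
      unfolding vec.span_Un by blast
    then have "x - h \<in> vec.span G"
      by simp
    with \<open>h \<in> vec.span (B - G)\<close> show ?thesis
      by blast
  qed
  ultimately show thesis using that by blast
qed

lemma card_le_power_codim:
  fixes C G :: "('a::{finite,field} ^ 'n) set"
  assumes "vec.independent G"
    and separated: "\<And>x y. x \<in> C \<Longrightarrow> y \<in> C \<Longrightarrow> y - x \<in> vec.span G \<Longrightarrow> x = y"
  shows "card C \<le> CARD('a) ^ (CARD('n) - card G)"
proof -
  obtain H where card_H: "card H = CARD('n) - card G"
    and decomp: "\<And>x. \<exists>h\<in>vec.span H. x - h \<in> vec.span G"
    using vec_obtain_complement[OF assms(1)] by blast
  obtain proj where proj: "\<And>x. proj x \<in> vec.span H \<and> x - proj x \<in> vec.span G"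
    using decomp by metis
  have "inj_on proj C"
  proof (rule inj_onI)
    fix x y assume "x \<in> C" "y \<in> C" "proj x = proj y"
    moreover have "(y - proj y) - (x - proj x) \<in> vec.span G"
      using proj vec.span_diff by blast
    ultimately show "x = y"
      using separated by simp
  qed
  then have "card C \<le> card (vec.span H)"
    using proj by (intro card_inj_on_le[OF _ _ finite]) blast+
  also have "\<dots> \<le> CARD('a) ^ card H"
    by (rule card_vec_span_le)
  finally show ?thesis
    using card_H by simp
qed

lemma wtF_le_card:
  fixes F :: "('a::field ^ 'n) set"
  assumes "I \<subseteq> F" "finite I" "v \<in> vec.span I"
  shows "wtF F v \<le> card I"
  unfolding wtF_def by (rule Least_le) (use assms in blast)

lemma wtF_zero [simp]:
  fixes F :: "('a::field ^ 'n) set"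
  shows "wtF F 0 = 0"
  using wtF_le_card[of "{}" F 0] by simp

lemma wtF_le_dim:
  fixes F :: "('a::field ^ 'n) set"
  assumes "vec.span F = UNIV"
  shows "wtF F v \<le> CARD('n)"
proof -
  obtain B where "B \<subseteq> F" "vec.independent B" "vec.span B = UNIV" "card B = CARD('n)"
    using vec_obtain_basis_subset[OF assms] .
  then show ?thesis
    using wtF_le_card[of B F v] vec.finiteI_independent[of B] by simp
qed

lemma wtF_eq_0_iff:
  fixes F :: "('a::field ^ 'n) set"
  assumes "vec.span F = UNIV"
  shows "wtF F v = 0 \<longleftrightarrow> v = 0"
proof
  obtain B where B: "B \<subseteq> F" "vec.independent B" "vec.span B = UNIV"
    using vec_obtain_basis_subset[OF assms] by metis
  then have "\<exists>k I. I \<subseteq> F \<and> finite I \<and> card I = k \<and> v \<in> vec.span I"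
    using vec.finiteI_independent[OF B(2)] by (intro exI[of _ "card B"] exI[of _ B]) simp
  from LeastI_ex[OF this] obtain I
    where "finite I" "card I = wtF F v" "v \<in> vec.span I"
    unfolding wtF_def by blast
  then show "wtF F v = 0 \<Longrightarrow> v = 0"
    by simp
qed simp

lemma min_distF_le_distF:
  fixes F :: "('a::field ^ 'n) set"
  assumes "vec.span F = UNIV" "x \<in> C" "y \<in> C" "x \<noteq> y"
  shows "min_distF F C \<le> distF F x y"
proof -
  have "{distF F x y | x y. x \<in> C \<and> y \<in> C \<and> x \<noteq> y} \<subseteq> {..CARD('n)}"
    unfolding distF_def using wtF_le_dim[OF assms(1)] by auto
  then show ?thesis
    unfolding min_distF_def using assms(2-4) finite_subset by (intro Min_le) auto
qed

lemma min_distF_le_dim: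
  fixes F :: "('a::field ^ 'n) set"
  assumes "vec.span F = UNIV" "card C \<ge> 2"
  shows "min_distF F C \<le> CARD('n)"
proof -
  obtain x y where "x \<in> C" "y \<in> C" "x \<noteq> y"
    using assms(2) card_le_Suc0_iff_eq[of C] by (metis card.infinite not_less_eq_eq numeral_2_eq_2 zero_le)
  then show ?thesis
    using min_distF_le_distF[OF assms(1)] wtF_le_dim[OF assms(1)]
    unfolding distF_def by (meson le_trans)
qed

lemma eq_if_diff_in_span_below_min_distF:
  fixes F :: "('a::field ^ 'n) set"
  assumes "vec.span F = UNIV"
    and "\<forall>v\<in>vec.span G. wtF F v \<le> min_distF F C - 1"
    and "x \<in> C" "y \<in> C" "y - x \<in> vec.span G"
  shows "x = y"
proof (rule ccontr)
  assume "x \<noteq> y"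
  then have "min_distF F C \<le> wtF F (y - x)" "wtF F (y - x) \<noteq> 0"
    using assms min_distF_le_distF[OF assms(1)] wtF_eq_0_iff[OF assms(1), of "y - x"]
    unfolding distF_def by auto
  with assms(2,5) show False
    by fastforce
qed

lemma finite_card_vec_independent_subsets:
  "finite {card G | G :: ('a::field ^ 'n) set. G \<subseteq> F \<and> vec.independent G \<and> P G}"
  by (rule finite_subset[of _ "{..CARD('n)}"]) (auto dest: vec_independent_card_le)

lemma muF_attained:
  fixes F :: "('a::field ^ 'n) set"
  obtains G where "G \<subseteq> F" "vec.independent G" "\<forall>v\<in>vec.span G. wtF F v \<le> t"
    "card G = muF F t"
proof -
  let ?M = "{card G | G. G \<subseteq> F \<and> vec.independent G \<and> (\<forall>v\<in>vec.span G. wtF F v \<le> t)}"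
  have "0 \<in> ?M"
    by (intro CollectI exI[of _ "{}"]) (simp add: vec.independent_empty)
  then have "?M \<noteq> {}"
    by blast
  then have "Max ?M \<in> ?M"
    by (rule Max_in[OF finite_card_vec_independent_subsets])
  then obtain G where G: "Max ?M = card G" "G \<subseteq> F" "vec.independent G"
    "\<forall>v\<in>vec.span G. wtF F v \<le> t"
    by blast
  show thesis
    by (rule that[OF G(2-4)]) (simp add: muF_def G(1))
qed

lemma le_muF:
  fixes F :: "('a::field ^ 'n) set"
  assumes "vec.span F = UNIV" "t \<le> CARD('n)"
  shows "t \<le> muF F t"
proof -
  obtain B where B: "B \<subseteq> F" "vec.independent B" "card B = CARD('n)"
    using vec_obtain_basis_subset[OF assms(1)] by metis
  then obtain G where G: "G \<subseteq> B" "card G = t"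
    using assms(2) obtain_subset_with_card_n by metis
  have "finite G"
    using G(1) vec.finiteI_independent[OF B(2)] finite_subset by blast
  then have "t \<in> {card G | G. G \<subseteq> F \<and> vec.independent G \<and> (\<forall>v\<in>vec.span G. wtF F v \<le> t)}"
    using G B wtF_le_card[of G F] vec.independent_mono[OF B(2) G(1)]
    by (intro CollectI exI[of _ G]) auto
  then show ?thesis
    unfolding muF_def by (rule Max_ge[OF finite_card_vec_independent_subsets])
qed

theorem theorem7p1:
  fixes F :: "('a::{finite,field} ^ 'n) set"
    and C :: "('a ^ 'n) set"
  assumes "spanning_family F"
    and "card C \<ge> 2"
  shows "card C \<le> CARD('a) ^ (CARD('n) - muF F (min_distF F C - 1))
         \<and> CARD('a) ^ (CARD('n) - muF F (min_distF F C - 1))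
             \<le> CARD('a) ^ (CARD('n) - min_distF F C + 1)"
proof -
  have span_F: "vec.span F = UNIV"
    using assms(1) unfolding spanning_family_def by auto
  obtain G where G: "vec.independent G" "\<forall>v\<in>vec.span G. wtF F v \<le> min_distF F C - 1"
    "card G = muF F (min_distF F C - 1)"
    using muF_attained by metis
  have "card C \<le> CARD('a) ^ (CARD('n) - muF F (min_distF F C - 1))"
    using card_le_power_codim[OF G(1) eq_if_diff_in_span_below_min_distF[OF span_F G(2)]] G(3)
    by simp
  moreover have "min_distF F C - 1 \<le> muF F (min_distF F C - 1)"
    using le_muF[OF span_F] min_distF_le_dim[OF span_F assms(2)] by simp
  then have "CARD('a) ^ (CARD('n) - muF F (min_distF F C - 1))
      \<le> CARD('a) ^ (CARD('n) - min_distF F C + 1)"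
    by (intro power_increasing) auto
  ultimately show ?thesis ..
qed

end
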